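(* Let $f(u)=e^{g(u)}$ where $g\in C^3[0,\infty)$ satisfies $g'>0$, $g''>0$, $g'^2-g''\ge0$ and $2g''^2-g'g'''>0$ on $[0,\infty)$. Then: (i) $\lim_{u\to\infty}f'(u)F(u)=1$ and $\lim_{u\to\infty}\frac{f'(u)^2}{f(u)f''(u)}=1$; (ii) $2f(u)f''(u)^2-f'(u)^2f''(u)-f(u)f'(u)f'''(u)>0$ for $u\ge0$; (iii) $F(u)-\frac{f'(u)}{f(u)f''(u)}>0$ for $u\ge0$; (iv) $h(y)\to0$ as $y\to\infty$; (v) $h'(y)<0$ for $y\ge-\log F(0)$.
   Context: $F(u)=\int_u^\infty\frac{ds}{f(s)}$ (finite), $\eta(y)=F^{-1}(e^{-y})$ for $y\ge-\log F(0)$, where $F^{-1}$ is the inverse of the decreasing function $F$, and $h(y)=1-f'(\eta(y))F(\eta(y))$ for $y\ge-\log F(0)$. *)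

theory Defs
  imports "HOL-Analysis.Analysis"
begin

definition Fint :: "(real \<Rightarrow> real) \<Rightarrow> real \<Rightarrow> real" where
  "Fint f u = integral {u..} (\<lambda>s. 1 / f s)"

definition eta :: "(real \<Rightarrow> real) \<Rightarrow> real \<Rightarrow> real" where
  "eta f y = the_inv_into {0..} (Fint f) (exp (- y))"

text \<open>h(y) = 1 - f'(eta y) F(eta y); f1 is the derivative of f.\<close>
definition hfun :: "(real \<Rightarrow> real) \<Rightarrow> (real \<Rightarrow> real) \<Rightarrow> real \<Rightarrow> real" where
  "hfun f f1 y = 1 - f1 (eta f y) * Fint f (eta f y)"

end

theory Submission
  imports Defs "HOL-Real_Asymp.Real_Asymp"
begin

text \<open>
  As g grows at least linearly, F is finite and tends to 0,
  and every inequality follows from one comparison principle: a function that tends to 0 at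
  infinity and has negative derivative on [u, infinity) is positive at u.
  With eps = g''/g'^2, which decreases to 0 because 2 g''^2 > g' g''', one has
  f f''/f'^2 = 1 + eps; comparing F with 1/f' and with 1/((1 + eps(u)) f') on [u, infinity)
  squeezes f' F between 1/(1 + eps) and 1, which gives (i).
  The expression in (ii) equals e^(3g) (2 g''^2 - g' g'''), and divided by -(f f'')^2 it is the
  derivative of F - f'/(f f''); comparison gives (iii).
  Finally eta inverts -log F, so eta' = f(eta) F(eta) and
  h'(y) = e^(-y) (f'(eta) - f(eta) f''(eta) F(eta)), which is negative by (iii), while (iv) is
  (i) composed with eta tending to infinity.
\<close>

section \<open>Calculus on half-lines\<close>

lemma at_within_atLeast_nontrivial:
  fixes a x :: real
  assumes "a \<le> x"
  shows "at x within {a..} \<noteq> bot"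
proof
  assume "at x within {a..} = bot"
  then have "at x within {x..x+1} = bot"
    using at_le[of "{x..x+1}" "{a..}" x] assms by (auto simp: bot_unique)
  then show False by (simp add: at_within_Icc_at_right)
qed

lemma DERIV_atLeast_unique:
  fixes h :: "real \<Rightarrow> real"
  assumes "a \<le> x" "(h has_real_derivative A) (at x within {a..})"
    "(h has_real_derivative B) (at x within {a..})"
  shows "A = B"
  using has_field_derivative_unique assms at_within_atLeast_nontrivial by blast

lemma DERIV_nonneg_imp_increasing_atLeast:
  fixes h h' :: "real \<Rightarrow> real"
  assumes deriv: "\<And>x. a \<le> x \<Longrightarrow> (h has_real_derivative h' x) (at x within {a..})"
    and nonneg: "\<And>x. a \<le> x \<Longrightarrow> 0 \<le> h' x" and "a \<le> x" "x \<le> y"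
  shows "h x \<le> h y"
proof (rule DERIV_nonneg_imp_increasing_open[OF \<open>x \<le> y\<close>])
  have "continuous_on {a..} h" by (rule DERIV_continuous_on[OF deriv]) auto
  then show "continuous_on {x..y} h" by (rule continuous_on_subset) (use assms in auto)
  fix z assume "x < z" "z < y"
  then show "\<exists>y. DERIV h z :> y \<and> 0 \<le> y"
    using deriv[of z] nonneg[of z] at_within_interior[of z "{a..}"] assms by auto
qed

lemma DERIV_pos_imp_increasing_atLeast:
  fixes h h' :: "real \<Rightarrow> real"
  assumes deriv: "\<And>x. a \<le> x \<Longrightarrow> (h has_real_derivative h' x) (at x within {a..})"
    and pos: "\<And>x. a \<le> x \<Longrightarrow> 0 < h' x" and "a \<le> x" "x < y"
  shows "h x < h y"
proof (rule DERIV_pos_imp_increasing_open[OF \<open>x < y\<close>])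
  have "continuous_on {a..} h" by (rule DERIV_continuous_on[OF deriv]) auto
  then show "continuous_on {x..y} h" by (rule continuous_on_subset) (use assms in auto)
  fix z assume "x < z" "z < y"
  then show "\<exists>y. DERIV h z :> y \<and> 0 < y"
    using deriv[of z] pos[of z] at_within_interior[of z "{a..}"] assms by auto
qed

lemma DERIV_nonpos_tendsto_0_imp_nonneg:
  fixes h h' :: "real \<Rightarrow> real"
  assumes deriv: "\<And>x. a \<le> x \<Longrightarrow> (h has_real_derivative h' x) (at x within {a..})"
    and nonpos: "\<And>x. a \<le> x \<Longrightarrow> h' x \<le> 0" and lim: "(h \<longlongrightarrow> 0) at_top"
  shows "0 \<le> h a"
proof -
  have "- h a \<le> - h x" if "a \<le> x" for x
    by (rule DERIV_nonneg_imp_increasing_atLeast[of a "\<lambda>x. - h x" "\<lambda>x. - h' x"])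
       (use deriv nonpos that in \<open>auto intro!: derivative_eq_intros\<close>)
  then have "\<forall>\<^sub>F x in at_top. h x \<le> h a"
    by (intro eventually_mono[OF eventually_ge_at_top[of a]]) force
  then show ?thesis
    using tendsto_le[OF trivial_limit_at_top_linorder tendsto_const lim] by blast
qed

lemma DERIV_neg_tendsto_0_imp_pos:
  fixes h h' :: "real \<Rightarrow> real"
  assumes deriv: "\<And>x. a \<le> x \<Longrightarrow> (h has_real_derivative h' x) (at x within {a..})"
    and neg: "\<And>x. a \<le> x \<Longrightarrow> h' x < 0" and lim: "(h \<longlongrightarrow> 0) at_top"
  shows "0 < h a"
proof -
  have "- h a < - h (a + 1)"
    by (rule DERIV_pos_imp_increasing_atLeast[of a "\<lambda>x. - h x" "\<lambda>x. - h' x"])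
       (use deriv neg in \<open>auto intro!: derivative_eq_intros\<close>)
  moreover have "0 \<le> h (a + 1)"
    by (rule DERIV_nonpos_tendsto_0_imp_nonneg[of "a + 1" h h'])
       (use neg lim in \<open>auto intro: has_field_derivative_subset[OF deriv] less_imp_le\<close>)
  ultimately show ?thesis by simp
qed

lemma integral_atLeast_split:
  fixes p :: "real \<Rightarrow> real"
  assumes "continuous_on {a..x} p" "p integrable_on {x..}" "a \<le> x"
  shows "integral {a..} p = integral {a..x} p + integral {x..} p"
proof -
  have "(p has_integral (integral {a..x} p + integral {x..} p)) ({a..x} \<union> {x..})"
  proof (rule has_integral_Un)
    show "(p has_integral integral {a..x} p) {a..x}"
      using integrable_continuous_interval[OF assms(1)] by blast
    show "(p has_integral integral {x..} p) {x..}"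
      using assms(2) by blast
    have "{a..x} \<inter> {x..} = {x}" using assms(3) by auto
    then show "negligible ({a..x} \<inter> {x..})" by simp
  qed
  moreover have "{a..x} \<union> {x..} = {a..}" using assms(3) by auto
  ultimately show ?thesis by (simp add: integral_unique)
qed

lemma DERIV_integral_atLeast:
  fixes p :: "real \<Rightarrow> real"
  assumes cont: "continuous_on {a..} p" and int: "\<And>u. a \<le> u \<Longrightarrow> p integrable_on {u..}"
    and "a \<le> u"
  shows "((\<lambda>x. integral {x..} p) has_real_derivative - p u) (at u within {a..})"
proof -
  have "continuous_on {a..u+1} p" by (rule continuous_on_subset[OF cont]) auto
  then have "((\<lambda>x. integral {a..x} p) has_real_derivative p u) (at u within {a..u+1})"
    by (rule integral_has_real_derivative) (use \<open>a \<le> u\<close> in auto)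
  moreover have "at u within {a..u+1} = at u within {a..}"
    by (rule at_within_nhd[of u "{..<u+1}"]) auto
  ultimately have "((\<lambda>x. integral {a..} p - integral {a..x} p) has_real_derivative - p u)
      (at u within {a..})"
    by (auto intro!: derivative_eq_intros)
  then show ?thesis
  proof (rule has_field_derivative_transform_within[OF _ zero_less_one])
    fix x assume "x \<in> {a..}"
    then show "integral {a..} p - integral {a..x} p = integral {x..} p"
      using integral_atLeast_split[of a x p] continuous_on_subset[OF cont] int by force
  qed (use \<open>a \<le> u\<close> in auto)
qed

lemma image_atLeast_strict_antimono_tendsto_0:
  fixes F :: "real \<Rightarrow> real"
  assumes cont: "continuous_on {a..} F" and dec: "strict_antimono_on {a..} F"
    and lim: "(F \<longlongrightarrow> 0) at_top"
  shows "F ` {a..} = {0<..F a}"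
proof
  have less: "F v < F u" if "a \<le> u" "u < v" for u v
    using monotone_onD[OF dec] that by auto
  have nonneg: "0 \<le> F u" if "a \<le> u" for u
  proof -
    have "\<forall>\<^sub>F v in at_top. F v \<le> F u"
      by (intro eventually_mono[OF eventually_ge_at_top[of u]])
         (use less that in \<open>force simp: le_less\<close>)
    then show ?thesis
      using tendsto_le[OF trivial_limit_at_top_linorder tendsto_const lim] by blast
  qed
  have "0 < F u" if "a \<le> u" for u
    using nonneg[of "u + 1"] less[of u "u + 1"] that by simp
  moreover have "F u \<le> F a" if "a \<le> u" for u
    using less[of a u] that by (cases "a = u") auto
  ultimately show "F ` {a..} \<subseteq> {0<..F a}" by auto
next
  show "{0<..F a} \<subseteq> F ` {a..}"
  proof
    fix t assume t: "t \<in> {0<..F a}"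
    obtain M where M: "a \<le> M" "F M < t"
      using eventually_conj[OF order_tendstoD(2)[OF lim, of t] eventually_ge_at_top[of a]] t
      by (auto simp: eventually_at_top_linorder)
    have "\<exists>x. a \<le> x \<and> x \<le> M \<and> F x = t"
      by (rule IVT2') (use M t continuous_on_subset[OF cont] in auto)
    then show "t \<in> F ` {a..}" by force
  qed
qed

lemma continuous_on_the_inv_into_atLeast:
  fixes F :: "real \<Rightarrow> real"
  assumes cont: "continuous_on {a..} F" and dec: "strict_antimono_on {a..} F"
    and lim: "(F \<longlongrightarrow> 0) at_top"
  shows "continuous_on {0<..F a} (the_inv_into {a..} F)"
proof -
  have inj: "inj_on F A" if "A \<subseteq> {a..}" for A
    using dec that by (auto simp: strict_antimono_iff_antimono intro: inj_on_subset)
  have "continuous (at t within {0<..F a}) (the_inv_into {a..} F)" if t: "t \<in> {0<..F a}" for t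
  proof -
    obtain M where M: "a \<le> M" "F M < t"
      using eventually_conj[OF order_tendstoD(2)[OF lim, of t] eventually_ge_at_top[of a]] t
      by (auto simp: eventually_at_top_linorder)
    have "continuous_on (F ` {a..M}) (the_inv_into {a..M} F)"
      by (rule continuous_on_inv_into) (use continuous_on_subset[OF cont] inj in auto)
    moreover have sub: "{F M..F a} \<subseteq> F ` {a..M}"
    proof
      fix s assume "s \<in> {F M..F a}"
      then have "\<exists>x. a \<le> x \<and> x \<le> M \<and> F x = s"
        by (intro IVT2') (use M continuous_on_subset[OF cont] in auto)
      then show "s \<in> F ` {a..M}" by force
    qed
    ultimately have "continuous_on {F M..F a} (the_inv_into {a..M} F)"
      by (rule continuous_on_subset)
    moreover have "the_inv_into {a..M} F s = the_inv_into {a..} F s" if "s \<in> {F M..F a}" for s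
      using sub that the_inv_into_f_f[OF inj[of "{a..M}"]] the_inv_into_f_f[OF inj[of "{a..}"]]
      by auto
    ultimately have "continuous_on {F M..F a} (the_inv_into {a..} F)"
      by (rule continuous_on_eq)
    moreover have "t \<in> {F M..F a}" using t M by auto
    ultimately have "continuous (at t within {F M..F a}) (the_inv_into {a..} F)"
      using continuous_on_eq_continuous_within by blast
    moreover have "at t within {F M..F a} = at t within {0<..F a}"
      by (rule at_within_nhd[of t "{max 0 (F M)<..}"]) (use t M in auto)
    ultimately show ?thesis by simp
  qed
  then show ?thesis by (simp add: continuous_on_eq_continuous_within)
qed

section \<open>Exponentials of convex functions\<close>

locale log_convex_growth =
  fixes g g1 g2 g3 f f1 f2 f3 :: "real \<Rightarrow> real"
  assumes g1: "\<And>x. 0 \<le> x \<Longrightarrow> (g has_real_derivative g1 x) (at x within {0..})"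
    and g2: "\<And>x. 0 \<le> x \<Longrightarrow> (g1 has_real_derivative g2 x) (at x within {0..})"
    and g3: "\<And>x. 0 \<le> x \<Longrightarrow> (g2 has_real_derivative g3 x) (at x within {0..})"
    and g1_pos: "\<And>x. 0 \<le> x \<Longrightarrow> 0 < g1 x"
    and g2_pos: "\<And>x. 0 \<le> x \<Longrightarrow> 0 < g2 x"
    and g3_bound: "\<And>x. 0 \<le> x \<Longrightarrow> 0 < 2 * (g2 x)\<^sup>2 - g1 x * g3 x"
    and f_eq: "f = (\<lambda>u. exp (g u))"
    and f1: "\<And>x. 0 \<le> x \<Longrightarrow> (f has_real_derivative f1 x) (at x within {0..})"
    and f2: "\<And>x. 0 \<le> x \<Longrightarrow> (f1 has_real_derivative f2 x) (at x within {0..})"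
    and f3: "\<And>x. 0 \<le> x \<Longrightarrow> (f2 has_real_derivative f3 x) (at x within {0..})"
begin

lemma f_pos: "0 < f x"
  by (simp add: f_eq)

lemma f1_eq: "0 \<le> x \<Longrightarrow> f1 x = g1 x * exp (g x)"
  by (rule DERIV_atLeast_unique[OF _ f1]) (auto simp: f_eq intro!: derivative_eq_intros g1)

lemma f2_eq: "0 \<le> x \<Longrightarrow> f2 x = (g2 x + (g1 x)\<^sup>2) * exp (g x)"
proof (rule DERIV_atLeast_unique[OF _ f2])
  assume "0 \<le> x"
  have "((\<lambda>u. g1 u * exp (g u)) has_real_derivative (g2 x + (g1 x)\<^sup>2) * exp (g x))
      (at x within {0..})"
    using g1[OF \<open>0 \<le> x\<close>] g2[OF \<open>0 \<le> x\<close>]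
    by (auto intro!: derivative_eq_intros simp: power2_eq_square algebra_simps)
  then show "(f1 has_real_derivative (g2 x + (g1 x)\<^sup>2) * exp (g x)) (at x within {0..})"
    by (rule has_field_derivative_transform_within[OF _ zero_less_one])
       (use \<open>0 \<le> x\<close> f1_eq in auto)
qed

lemma f3_eq: "0 \<le> x \<Longrightarrow> f3 x = (g3 x + 3 * g1 x * g2 x + (g1 x)^3) * exp (g x)"
proof (rule DERIV_atLeast_unique[OF _ f3])
  assume "0 \<le> x"
  have "((\<lambda>u. (g2 u + (g1 u)\<^sup>2) * exp (g u)) has_real_derivative
      (g3 x + 3 * g1 x * g2 x + (g1 x)^3) * exp (g x)) (at x within {0..})"
    using g1[OF \<open>0 \<le> x\<close>] g2[OF \<open>0 \<le> x\<close>] g3[OF \<open>0 \<le> x\<close>]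
    by (auto intro!: derivative_eq_intros simp: power2_eq_square power3_eq_cube algebra_simps)
  then show "(f2 has_real_derivative (g3 x + 3 * g1 x * g2 x + (g1 x)^3) * exp (g x))
      (at x within {0..})"
    by (rule has_field_derivative_transform_within[OF _ zero_less_one])
       (use \<open>0 \<le> x\<close> f2_eq in auto)
qed

lemma f1_pos: "0 \<le> x \<Longrightarrow> 0 < f1 x"
  by (simp add: f1_eq g1_pos)

lemma f2_pos: "0 \<le> x \<Longrightarrow> 0 < f2 x"
  by (simp add: f2_eq add_pos_nonneg g2_pos)

lemma f1_sq_less_f_f2:
  assumes "0 \<le> x"
  shows "(f1 x)\<^sup>2 < f x * f2 x"
proof -
  have "f x * f2 x - (f1 x)\<^sup>2 = g2 x * (exp (g x))\<^sup>2"
    by (simp add: f_eq f1_eq f2_eq assms power2_eq_square algebra_simps)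
  moreover have "0 < g2 x * (exp (g x))\<^sup>2" using g2_pos[OF assms] by simp
  ultimately show ?thesis by linarith
qed

lemma f_third_order_pos:
  assumes "0 \<le> x"
  shows "0 < 2 * f x * (f2 x)\<^sup>2 - (f1 x)\<^sup>2 * f2 x - f x * f1 x * f3 x"
proof -
  have "2 * f x * (f2 x)\<^sup>2 - (f1 x)\<^sup>2 * f2 x - f x * f1 x * f3 x
      = (exp (g x))^3 * (2 * (g2 x)\<^sup>2 - g1 x * g3 x)"
    by (simp add: f_eq f1_eq f2_eq f3_eq assms power2_eq_square power3_eq_cube algebra_simps)
  then show ?thesis using g3_bound[OF assms] by simp
qed

lemma g1_ge: "0 \<le> x \<Longrightarrow> g1 0 \<le> g1 x"
  by (rule DERIV_nonneg_imp_increasing_atLeast[OF g2 less_imp_le[OF g2_pos]]) auto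

lemma inverse_f_le_exp:
  assumes "0 \<le> x"
  shows "1 / f x \<le> exp (- g 0) * exp (- g1 0 * x)"
proof -
  have "g 0 - g1 0 * 0 \<le> g x - g1 0 * x"
    by (rule DERIV_nonneg_imp_increasing_atLeast[of 0 "\<lambda>u. g u - g1 0 * u" "\<lambda>u. g1 u - g1 0"])
       (use assms g1_ge in \<open>auto intro!: derivative_eq_intros g1\<close>)
  then show ?thesis by (simp add: f_eq exp_minus mult_exp_exp field_simps)
qed

lemma inverse_f1_le_exp:
  assumes "0 \<le> x"
  shows "1 / f1 x \<le> exp (- g 0) * (exp (- g1 0 * x) / g1 0)"
proof -
  have "1 / f1 x = (1 / f x) / g1 x"
    by (simp add: f_eq f1_eq assms)
  also have "\<dots> \<le> (1 / f x) / g1 0"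
    by (rule divide_left_mono) (use g1_ge g1_pos f_pos[THEN less_imp_le] assms in auto)
  also have "\<dots> \<le> exp (- g 0) * exp (- g1 0 * x) / g1 0"
    by (rule divide_right_mono[OF inverse_f_le_exp]) (use g1_pos[of 0] assms in auto)
  finally show ?thesis by simp
qed

lemma continuous_on_inverse_f: "continuous_on {0..} (\<lambda>s. 1 / f s)"
  by (intro continuous_intros DERIV_continuous_on[OF f1]) (auto simp: f_eq)

lemma has_integral_exp_bound:
  "((\<lambda>s. exp (- g 0) * exp (- g1 0 * s)) has_integral
      exp (- g 0) * (exp (- g1 0 * u) / g1 0)) {u..}"
  by (intro has_integral_mult_right has_integral_exp_minus_to_infinity g1_pos) simp

lemma integrable_inverse_f:
  assumes "0 \<le> u"
  shows "(\<lambda>s. 1 / f s) integrable_on {u..}"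
proof (rule measurable_bounded_by_integrable_imp_integrable_real)
  show "(\<lambda>s. 1 / f s) \<in> borel_measurable (lebesgue_on {u..})"
    by (rule continuous_imp_measurable_on_sets_lebesgue[OF continuous_on_subset])
       (use continuous_on_inverse_f assms in auto)
  show "(\<lambda>s. exp (- g 0) * exp (- g1 0 * s)) integrable_on {u..}"
    using has_integral_exp_bound by blast
  show "\<bar>1 / f s\<bar> \<le> exp (- g 0) * exp (- g1 0 * s)" if "s \<in> {u..}" for s
    using inverse_f_le_exp[of s] f_pos[of s] that assms by simp
qed simp

lemma Fint_nonneg: "0 \<le> u \<Longrightarrow> 0 \<le> Fint f u"
  unfolding Fint_def using integrable_inverse_f f_pos
  by (intro integral_nonneg) (auto simp: less_imp_le)

lemma Fint_le_exp:
  assumes "0 \<le> u"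
  shows "Fint f u \<le> exp (- g 0) * (exp (- g1 0 * u) / g1 0)"
  unfolding Fint_def
  using integral_le[OF integrable_inverse_f[OF assms]
      has_integral_integrable[OF has_integral_exp_bound]]
    inverse_f_le_exp assms integral_unique[OF has_integral_exp_bound]
  by force

lemma tendsto_exp_bound_0: "((\<lambda>u. exp (- g 0) * (exp (- g1 0 * u) / g1 0)) \<longlongrightarrow> 0) at_top"
  using g1_pos[of 0] by real_asymp

lemma tendsto_Fint_0: "(Fint f \<longlongrightarrow> 0) at_top"
proof (rule tendsto_sandwich[OF _ _ tendsto_const tendsto_exp_bound_0])
  show "\<forall>\<^sub>F u in at_top. 0 \<le> Fint f u"
    using eventually_ge_at_top[of 0] by eventually_elim (rule Fint_nonneg)
  show "\<forall>\<^sub>F u in at_top. Fint f u \<le> exp (- g 0) * (exp (- g1 0 * u) / g1 0)"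
    using eventually_ge_at_top[of 0] by eventually_elim (rule Fint_le_exp)
qed

lemma tendsto_inverse_f1_0: "((\<lambda>u. 1 / f1 u) \<longlongrightarrow> 0) at_top"
proof (rule tendsto_sandwich[OF _ _ tendsto_const tendsto_exp_bound_0])
  show "\<forall>\<^sub>F u in at_top. 0 \<le> 1 / f1 u"
    using eventually_ge_at_top[of 0] by eventually_elim (simp add: f1_pos less_imp_le)
  show "\<forall>\<^sub>F u in at_top. 1 / f1 u \<le> exp (- g 0) * (exp (- g1 0 * u) / g1 0)"
    using eventually_ge_at_top[of 0] by eventually_elim (rule inverse_f1_le_exp)
qed

lemma DERIV_Fint: "0 \<le> u \<Longrightarrow> (Fint f has_real_derivative - (1 / f u)) (at u within {0..})"
  unfolding Fint_def[abs_def]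
  by (rule DERIV_integral_atLeast[OF continuous_on_inverse_f integrable_inverse_f])

definition eps :: "real \<Rightarrow> real" where
  "eps u = g2 u / (g1 u)\<^sup>2"

lemma eps_pos: "0 \<le> u \<Longrightarrow> 0 < eps u"
  using g1_pos[of u] g2_pos[of u] by (simp add: eps_def)

lemma f_f2_div_f1_sq: "0 \<le> u \<Longrightarrow> f u * f2 u / (f1 u)\<^sup>2 = 1 + eps u"
  using g1_pos[of u] by (simp add: f_eq f1_eq f2_eq eps_def power2_eq_square field_simps)

lemma eps_antimono:
  assumes "0 \<le> u" "u \<le> v"
  shows "eps v \<le> eps u"
proof -
  have "((\<lambda>u. - eps u) has_real_derivative g1 x * (2 * (g2 x)\<^sup>2 - g1 x * g3 x) / (g1 x)^4)
      (at x within {0..})" if "0 \<le> x" for x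
    unfolding eps_def using g2[OF that] g3[OF that] g1_pos[OF that]
    by (auto intro!: derivative_eq_intros simp: power2_eq_square power4_eq_xxxx field_simps)
  moreover have "0 \<le> g1 x * (2 * (g2 x)\<^sup>2 - g1 x * g3 x) / (g1 x)^4" if "0 \<le> x" for x
    using g1_pos[OF that] g3_bound[OF that] by simp
  ultimately have "- eps u \<le> - eps v"
    by (rule DERIV_nonneg_imp_increasing_atLeast) (use assms in auto)
  then show ?thesis by simp
qed

lemma eps_tendsto_0: "(eps \<longlongrightarrow> 0) at_top"
proof (rule order_tendstoI)
  fix a :: real assume "a < 0"
  show "\<forall>\<^sub>F x in at_top. a < eps x"
    using eventually_ge_at_top[of 0] by eventually_elim (use eps_pos \<open>a < 0\<close> in force)
next
  fix \<delta> :: real assume "0 < \<delta>"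
  have "\<exists>u\<ge>0. eps u < \<delta>"
  proof (rule ccontr)
    assume "\<not> (\<exists>u\<ge>0. eps u < \<delta>)"
    then have ge: "\<delta> \<le> eps u" if "0 \<le> u" for u using that by force
    \<comment> \<open>\<open>eps = (- 1 / g1)'\<close> and \<open>- 1 / g1 < 0\<close>, so \<open>eps\<close> cannot stay above \<open>\<delta>\<close>\<close>
    have "((\<lambda>u. - 1 / g1 u - \<delta> * u) has_real_derivative eps x - \<delta>) (at x within {0..})"
      if "0 \<le> x" for x
      unfolding eps_def using g2[OF that] g1_pos[OF that]
      by (auto intro!: derivative_eq_intros simp: power2_eq_square)
    then have "- 1 / g1 0 - \<delta> * 0 \<le> - 1 / g1 u - \<delta> * u" if "0 \<le> u" for u
      by (rule DERIV_nonneg_imp_increasing_atLeast) (use ge that in auto)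
    from this[of "1 / (g1 0 * \<delta>)"] show False
      using g1_pos[of 0] g1_pos[of "1 / (g1 0 * \<delta>)"] \<open>0 < \<delta>\<close> by simp
  qed
  then obtain u where u: "0 \<le> u" "eps u < \<delta>" by blast
  show "\<forall>\<^sub>F x in at_top. eps x < \<delta>"
    using eventually_ge_at_top[of u] by eventually_elim (use eps_antimono u in force)
qed

lemma DERIV_inverse_f1:
  "0 \<le> x \<Longrightarrow> ((\<lambda>u. 1 / f1 u) has_real_derivative - f2 x / (f1 x)\<^sup>2) (at x within {0..})"
  using f2[of x] f1_pos[of x] by (auto intro!: derivative_eq_intros simp: power2_eq_square)

lemma Fint_less_inverse_f1:
  assumes "0 \<le> u"
  shows "Fint f u < 1 / f1 u"
proof -
  have "0 < 1 / f1 u - Fint f u"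
  proof (rule DERIV_neg_tendsto_0_imp_pos[where h = "\<lambda>s. 1 / f1 s - Fint f s"])
    fix x assume "u \<le> x"
    then have "0 \<le> x" using assms by simp
    show "((\<lambda>s. 1 / f1 s - Fint f s) has_real_derivative - f2 x / (f1 x)\<^sup>2 - - (1 / f x))
        (at x within {u..})"
      by (rule has_field_derivative_subset[OF DERIV_diff[OF DERIV_inverse_f1 DERIV_Fint]])
         (use \<open>0 \<le> x\<close> assms in auto)
    show "- f2 x / (f1 x)\<^sup>2 - - (1 / f x) < 0"
      using f1_sq_less_f_f2[OF \<open>0 \<le> x\<close>] f_pos[of x] f1_pos[OF \<open>0 \<le> x\<close>]
      by (simp add: field_simps)
  next
    show "((\<lambda>s. 1 / f1 s - Fint f s) \<longlongrightarrow> 0) at_top"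
      using tendsto_diff[OF tendsto_inverse_f1_0 tendsto_Fint_0] by simp
  qed
  then show ?thesis by simp
qed

lemma inverse_f1_le_Fint:
  assumes "0 \<le> u"
  shows "1 / f1 u \<le> (1 + eps u) * Fint f u"
proof -
  have "0 \<le> (1 + eps u) * Fint f u - 1 / f1 u"
  proof (rule DERIV_nonpos_tendsto_0_imp_nonneg
      [where h = "\<lambda>s. (1 + eps u) * Fint f s - 1 / f1 s"])
    fix x assume "u \<le> x"
    then have "0 \<le> x" using assms by simp
    show "((\<lambda>s. (1 + eps u) * Fint f s - 1 / f1 s) has_real_derivative
        (1 + eps u) * - (1 / f x) - - f2 x / (f1 x)\<^sup>2) (at x within {u..})"
      by (rule has_field_derivative_subset[OF DERIV_diff[OF DERIV_cmult[OF DERIV_Fint]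
            DERIV_inverse_f1]])
         (use \<open>0 \<le> x\<close> assms in auto)
    have "f2 x / (f1 x)\<^sup>2 = (1 + eps x) / f x"
      using f_f2_div_f1_sq[OF \<open>0 \<le> x\<close>] f_pos[of x] by (simp add: field_simps)
    moreover have "eps x \<le> eps u" by (rule eps_antimono) (use assms \<open>u \<le> x\<close> in auto)
    ultimately show "(1 + eps u) * - (1 / f x) - - f2 x / (f1 x)\<^sup>2 \<le> 0"
      using f_pos[of x] by (simp add: divide_right_mono field_simps)
  next
    show "((\<lambda>s. (1 + eps u) * Fint f s - 1 / f1 s) \<longlongrightarrow> 0) at_top"
      using tendsto_diff[OF tendsto_mult_right_zero[OF tendsto_Fint_0] tendsto_inverse_f1_0]
      by simp
  qed
  then show ?thesis by simp
qed

lemma tendsto_f1_sq_div_f_f2: "((\<lambda>u. (f1 u)\<^sup>2 / (f u * f2 u)) \<longlongrightarrow> 1) at_top"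
proof -
  have "((\<lambda>u. 1 / (1 + eps u)) \<longlongrightarrow> 1 / (1 + 0)) at_top"
    by (intro tendsto_intros eps_tendsto_0) simp
  moreover have "\<forall>\<^sub>F u in at_top. 1 / (1 + eps u) = (f1 u)\<^sup>2 / (f u * f2 u)"
    using eventually_ge_at_top[of 0]
    by eventually_elim (simp flip: f_f2_div_f1_sq)
  ultimately show ?thesis by (simp add: tendsto_cong)
qed

lemma tendsto_f1_Fint: "((\<lambda>u. f1 u * Fint f u) \<longlongrightarrow> 1) at_top"
proof (rule tendsto_sandwich)
  show "\<forall>\<^sub>F u in at_top. 1 / (1 + eps u) \<le> f1 u * Fint f u"
    using eventually_ge_at_top[of 0]
  proof eventually_elim
    case (elim u)
    then show ?case
      using inverse_f1_le_Fint[OF elim] eps_pos[OF elim] f1_pos[OF elim]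
      by (simp add: field_simps)
  qed
  show "\<forall>\<^sub>F u in at_top. f1 u * Fint f u \<le> 1"
    using eventually_ge_at_top[of 0]
  proof eventually_elim
    case (elim u)
    then show ?case
      using Fint_less_inverse_f1[OF elim] f1_pos[OF elim] by (simp add: field_simps)
  qed
  show "((\<lambda>u. 1 / (1 + eps u)) \<longlongrightarrow> 1) at_top"
    using tendsto_divide[OF tendsto_const tendsto_add[OF tendsto_const eps_tendsto_0], of 1 1]
    by simp
qed (rule tendsto_const)

lemma DERIV_f1_div_f_f2:
  assumes "0 \<le> x"
  shows "((\<lambda>u. f1 u / (f u * f2 u)) has_real_derivative
      (f x * (f2 x)\<^sup>2 - (f1 x)\<^sup>2 * f2 x - f x * f1 x * f3 x) / (f x * f2 x)\<^sup>2)
      (at x within {0..})"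
proof -
  have "f x * f2 x \<noteq> 0" using f_pos[of x] f2_pos[OF assms] by simp
  from DERIV_divide[OF f2[OF assms] DERIV_mult[OF f1[OF assms] f3[OF assms]] this]
  show ?thesis by (simp add: power2_eq_square algebra_simps)
qed

lemma tendsto_f1_div_f_f2_0: "((\<lambda>u. f1 u / (f u * f2 u)) \<longlongrightarrow> 0) at_top"
proof (rule tendsto_sandwich[OF _ _ tendsto_const tendsto_inverse_f1_0])
  show "\<forall>\<^sub>F u in at_top. 0 \<le> f1 u / (f u * f2 u)"
    using eventually_ge_at_top[of 0]
    by eventually_elim (simp add: f1_pos f2_pos f_pos less_imp_le)
  show "\<forall>\<^sub>F u in at_top. f1 u / (f u * f2 u) \<le> 1 / f1 u"
    using eventually_ge_at_top[of 0]
  proof eventually_elim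
    case (elim u)
    then show ?case
      using f1_sq_less_f_f2[OF elim] f1_pos[OF elim] f2_pos[OF elim] f_pos[of u]
      by (simp add: field_simps power2_eq_square)
  qed
qed

lemma f1_div_f_f2_less_Fint:
  assumes "0 \<le> u"
  shows "f1 u / (f u * f2 u) < Fint f u"
proof -
  have "0 < Fint f u - f1 u / (f u * f2 u)"
  proof (rule DERIV_neg_tendsto_0_imp_pos[where h = "\<lambda>s. Fint f s - f1 s / (f s * f2 s)"])
    fix x assume "u \<le> x"
    then have "0 \<le> x" using assms by simp
    define D where
      "D = (f x * (f2 x)\<^sup>2 - (f1 x)\<^sup>2 * f2 x - f x * f1 x * f3 x) / (f x * f2 x)\<^sup>2"
    show "((\<lambda>s. Fint f s - f1 s / (f s * f2 s)) has_real_derivative - (1 / f x) - D)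
        (at x within {u..})"
      unfolding D_def
      by (rule has_field_derivative_subset[OF DERIV_diff[OF DERIV_Fint DERIV_f1_div_f_f2]])
         (use \<open>0 \<le> x\<close> assms in auto)
    have "- (1 / f x) - D
        = - ((2 * f x * (f2 x)\<^sup>2 - (f1 x)\<^sup>2 * f2 x - f x * f1 x * f3 x) / (f x * f2 x)\<^sup>2)"
      unfolding D_def using f_pos[of x] f2_pos[OF \<open>0 \<le> x\<close>]
      by (simp add: field_simps power2_eq_square)
    moreover have
      "0 < (2 * f x * (f2 x)\<^sup>2 - (f1 x)\<^sup>2 * f2 x - f x * f1 x * f3 x) / (f x * f2 x)\<^sup>2"
      using f_third_order_pos[OF \<open>0 \<le> x\<close>] f_pos[of x] f2_pos[OF \<open>0 \<le> x\<close>] by simp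
    ultimately show "- (1 / f x) - D < 0" by linarith
  next
    show "((\<lambda>s. Fint f s - f1 s / (f s * f2 s)) \<longlongrightarrow> 0) at_top"
      using tendsto_diff[OF tendsto_Fint_0 tendsto_f1_div_f_f2_0] by simp
  qed
  then show ?thesis by simp
qed

lemma Fint_pos:
  assumes "0 \<le> u"
  shows "0 < Fint f u"
proof -
  have "0 < f1 u / (f u * f2 u)" using f1_pos f2_pos f_pos assms by simp
  then show ?thesis using f1_div_f_f2_less_Fint[OF assms] by linarith
qed

lemma strict_antimono_Fint: "strict_antimono_on {0..} (Fint f)"
proof (rule monotone_onI)
  fix u v :: real assume "u \<in> {0..}" "v \<in> {0..}" "u < v"
  then have "- Fint f u < - Fint f v"
    using DERIV_pos_imp_increasing_atLeast[of 0 "\<lambda>s. - Fint f s" "\<lambda>s. 1 / f s"]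
      DERIV_minus[OF DERIV_Fint] f_pos by simp
  then show "Fint f v < Fint f u" by simp
qed

lemma continuous_on_Fint: "continuous_on {0..} (Fint f)"
  by (rule DERIV_continuous_on[OF DERIV_Fint]) simp

lemma inj_on_Fint: "inj_on (Fint f) {0..}"
  using strict_antimono_Fint by (simp add: strict_antimono_iff_antimono)

lemma exp_neg_le_Fint_0:
  assumes "- ln (Fint f 0) \<le> y"
  shows "exp (- y) \<le> Fint f 0"
proof -
  have "exp (- y) \<le> exp (ln (Fint f 0))" using assms by simp
  also have "\<dots> = Fint f 0" using Fint_pos[of 0] by simp
  finally show ?thesis .
qed

lemma Fint_eta:
  assumes "- ln (Fint f 0) \<le> y"
  shows "0 \<le> eta f y" and "Fint f (eta f y) = exp (- y)"
proof -
  have "exp (- y) \<in> {0<..Fint f 0}" using exp_neg_le_Fint_0[OF assms] by simp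
  then have "exp (- y) \<in> Fint f ` {0..}"
    using image_atLeast_strict_antimono_tendsto_0[OF continuous_on_Fint strict_antimono_Fint
        tendsto_Fint_0] by blast
  then show "0 \<le> eta f y" "Fint f (eta f y) = exp (- y)"
    unfolding eta_def
    using the_inv_into_into[OF inj_on_Fint _ order_refl] f_the_inv_into_f[OF inj_on_Fint]
    by auto
qed

lemma eta_Fint: "0 \<le> u \<Longrightarrow> eta f (- ln (Fint f u)) = u"
  unfolding eta_def using Fint_pos[of u] the_inv_into_f_f[OF inj_on_Fint] by simp

lemma filterlim_eta_at_top: "filterlim (eta f) at_top at_top"
  unfolding filterlim_at_top
proof
  fix Z :: real
  define u where "u = max Z 0"
  have "0 \<le> u" by (simp add: u_def)
  show "\<forall>\<^sub>F y in at_top. Z \<le> eta f y"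
    using eventually_ge_at_top[of "max (- ln (Fint f 0)) (- ln (Fint f u))"]
  proof eventually_elim
    case (elim y)
    then have y: "- ln (Fint f 0) \<le> y" "- ln (Fint f u) \<le> y" by auto
    have "Fint f (eta f y) = exp (- y)" by (rule Fint_eta(2)[OF y(1)])
    also have "\<dots> \<le> exp (ln (Fint f u))" using y(2) by simp
    also have "\<dots> = Fint f u" using Fint_pos[OF \<open>0 \<le> u\<close>] by simp
    finally have "u \<le> eta f y"
      using monotone_onD[OF strict_antimono_Fint, of "eta f y" u] Fint_eta(1)[OF y(1)] \<open>0 \<le> u\<close>
      by force
    then show ?case by (simp add: u_def)
  qed
qed

lemma continuous_on_eta: "continuous_on {- ln (Fint f 0)..} (eta f)"
proof -
  have "continuous_on {- ln (Fint f 0)..} (\<lambda>y. the_inv_into {0..} (Fint f) (exp (- y)))"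
  proof (rule continuous_on_compose2[OF continuous_on_the_inv_into_atLeast[OF continuous_on_Fint
          strict_antimono_Fint tendsto_Fint_0]])
    show "continuous_on {- ln (Fint f 0)..} (\<lambda>y. exp (- y))"
      by (intro continuous_intros)
    show "(\<lambda>y. exp (- y)) ` {- ln (Fint f 0)..} \<subseteq> {0<..Fint f 0}"
      using exp_neg_le_Fint_0 by auto
  qed
  then show ?thesis by (simp add: eta_def[abs_def])
qed

lemma image_neg_ln_Fint: "(\<lambda>u. - ln (Fint f u)) ` {0..} = {- ln (Fint f 0)..}"
proof
  have "Fint f u \<le> Fint f 0" if "0 \<le> u" for u
    using monotone_onD[OF strict_antimono_Fint, of 0 u] that by (cases "u = 0") auto
  then show "(\<lambda>u. - ln (Fint f u)) ` {0..} \<subseteq> {- ln (Fint f 0)..}"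
    using Fint_pos by auto
  show "{- ln (Fint f 0)..} \<subseteq> (\<lambda>u. - ln (Fint f u)) ` {0..}"
  proof
    fix y assume "y \<in> {- ln (Fint f 0)..}"
    then have "y = - ln (Fint f (eta f y))" "eta f y \<in> {0..}"
      using Fint_eta by auto
    then show "y \<in> (\<lambda>u. - ln (Fint f u)) ` {0..}" by blast
  qed
qed

lemma DERIV_eta:
  assumes y: "- ln (Fint f 0) \<le> y"
  shows "(eta f has_real_derivative f (eta f y) * Fint f (eta f y))
    (at y within {- ln (Fint f 0)..})"
proof -
  define u where "u = eta f y"
  define c where "c = f u * Fint f u"
  have u: "0 \<le> u" "- ln (Fint f u) = y" using Fint_eta[OF y] by (auto simp: u_def)
  have "0 < c" using f_pos Fint_pos[OF u(1)] by (simp add: c_def)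
  have "((\<lambda>s. - ln (Fint f s)) has_real_derivative 1 / c) (at u within {0..})"
    using DERIV_Fint[OF u(1)] Fint_pos[OF u(1)]
    by (auto intro!: derivative_eq_intros simp: c_def)
  then have "((\<lambda>s. - ln (Fint f s)) has_derivative (*) (1 / c)) (at u within {0..})"
    by (simp add: has_field_derivative_def)
  then have "(eta f has_derivative (*) c)
      (at (- ln (Fint f u)) within (\<lambda>s. - ln (Fint f s)) ` {0..})"
  proof (rule has_derivative_inverse_within)
    show "continuous (at (- ln (Fint f u)) within (\<lambda>s. - ln (Fint f s)) ` {0..}) (eta f)"
      using continuous_on_eta y unfolding image_neg_ln_Fint u(2)
      by (simp add: continuous_on_eq_continuous_within)
    show "(*) c \<circ> (*) (1 / c) = id" using \<open>0 < c\<close> by (auto simp: fun_eq_iff)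
  qed (use u(1) eta_Fint in auto)
  then show ?thesis
    unfolding u(2) image_neg_ln_Fint by (simp add: has_field_derivative_def c_def u_def)
qed

lemma tendsto_hfun_0: "(hfun f f1 \<longlongrightarrow> 0) at_top"
proof -
  have "((\<lambda>y. f1 (eta f y) * Fint f (eta f y)) \<longlongrightarrow> 1) at_top"
    by (rule filterlim_compose[OF tendsto_f1_Fint filterlim_eta_at_top])
  then have "((\<lambda>y. 1 - f1 (eta f y) * Fint f (eta f y)) \<longlongrightarrow> 1 - 1) at_top"
    by (intro tendsto_diff tendsto_const)
  then show ?thesis by (simp add: hfun_def[abs_def])
qed

lemma DERIV_hfun_neg:
  assumes y: "- ln (Fint f 0) \<le> y"
  shows "\<exists>D. (hfun f f1 has_real_derivative D) (at y within {- ln (Fint f 0)..}) \<and> D < 0"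
proof -
  define S where "S = {- ln (Fint f 0)..}"
  define u where "u = eta f y"
  have u: "0 \<le> u" "Fint f u = exp (- y)" using Fint_eta[OF y] by (auto simp: u_def)
  have "eta f ` S \<subseteq> {0..}" using Fint_eta(1) by (auto simp: S_def)
  then have "(f1 has_real_derivative f2 u) (at (eta f y) within eta f ` S)"
    unfolding u_def[symmetric] by (rule has_field_derivative_subset[OF f2[OF u(1)]])
  from DERIV_image_chain[OF this DERIV_eta[OF y, folded S_def]]
  have "((\<lambda>z. f1 (eta f z)) has_real_derivative f2 u * (f u * exp (- y))) (at y within S)"
    by (simp add: o_def u u_def[symmetric])
  then have "((\<lambda>z. 1 - f1 (eta f z) * exp (- z)) has_real_derivative
      exp (- y) * (f1 u - f u * f2 u * Fint f u)) (at y within S)"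
    by (auto intro!: derivative_eq_intros simp: u u_def[symmetric] algebra_simps)
  then have "(hfun f f1 has_real_derivative exp (- y) * (f1 u - f u * f2 u * Fint f u))
      (at y within S)"
    by (rule has_field_derivative_transform_within[OF _ zero_less_one])
       (use y Fint_eta(2) in \<open>auto simp: S_def hfun_def\<close>)
  moreover have "f1 u < f u * f2 u * Fint f u"
    using f1_div_f_f2_less_Fint[OF u(1)] f_pos[of u] f2_pos[OF u(1)] by (simp add: field_simps)
  ultimately show ?thesis
    unfolding S_def by (intro exI conjI) (auto simp: mult_pos_neg)
qed

end

theorem lemma3p2:
  fixes g g1 g2 g3 f f1 f2 f3 :: "real \<Rightarrow> real"
  assumes g1: "\<And>x. x \<ge> 0 \<Longrightarrow> (g has_real_derivative g1 x) (at x within {0..})"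
      and g2: "\<And>x. x \<ge> 0 \<Longrightarrow> (g1 has_real_derivative g2 x) (at x within {0..})"
      and g3: "\<And>x. x \<ge> 0 \<Longrightarrow> (g2 has_real_derivative g3 x) (at x within {0..})"
      and g3_cont: "continuous_on {0..} g3"
      and g1_pos: "\<And>x. x \<ge> 0 \<Longrightarrow> g1 x > 0"
      and g2_pos: "\<And>x. x \<ge> 0 \<Longrightarrow> g2 x > 0"
      and g_ineq1: "\<And>x. x \<ge> 0 \<Longrightarrow> (g1 x)\<^sup>2 - g2 x \<ge> 0"
      and g_ineq2: "\<And>x. x \<ge> 0 \<Longrightarrow> 2 * (g2 x)\<^sup>2 - g1 x * g3 x > 0"
      and f_def: "f = (\<lambda>u. exp (g u))"
      and f1: "\<And>x. x \<ge> 0 \<Longrightarrow> (f has_real_derivative f1 x) (at x within {0..})"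
      and f2: "\<And>x. x \<ge> 0 \<Longrightarrow> (f1 has_real_derivative f2 x) (at x within {0..})"
      and f3: "\<And>x. x \<ge> 0 \<Longrightarrow> (f2 has_real_derivative f3 x) (at x within {0..})"
  shows "((\<lambda>u. f1 u * Fint f u) \<longlongrightarrow> 1) at_top
       \<and> ((\<lambda>u. (f1 u)\<^sup>2 / (f u * f2 u)) \<longlongrightarrow> 1) at_top
       \<and> (\<forall>u\<ge>0. 2 * f u * (f2 u)\<^sup>2 - (f1 u)\<^sup>2 * f2 u - f u * f1 u * f3 u > 0)
       \<and> (\<forall>u\<ge>0. Fint f u - f1 u / (f u * f2 u) > 0)
       \<and> (hfun f f1 \<longlongrightarrow> 0) at_top
       \<and> (\<forall>y\<ge>- ln (Fint f 0). \<exists>D. (hfun f f1 has_real_derivative D)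
              (at y within {- ln (Fint f 0)..}) \<and> D < 0)"
proof -
  interpret log_convex_growth g g1 g2 g3 f f1 f2 f3
    using g1 g2 g3 g1_pos g2_pos g_ineq2 f_def f1 f2 f3 by unfold_locales
  show ?thesis
    using tendsto_f1_Fint tendsto_f1_sq_div_f_f2 f_third_order_pos f1_div_f_f2_less_Fint
      tendsto_hfun_0 DERIV_hfun_neg
    by auto
qed

end
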